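(* Let $\mathbf{P}=(X,P)$ be a finite interval order with no duplicated holdings, and let $\mathbf{I}$ be a distinguishing interval representation of $\mathbf{P}$, assigning to each $x\in X$ the interval $[l_x,r_x]$. Then for every linear extension $L$ of $P$ there exists a choice function $f$ on $\mathbf{I}$ such that $L(f)=L$.
   Context: An interval representation of a poset $(X,P)$ assigns to each $x\in X$ a closed real interval $[l_x,r_x]$ (lengths may be $0$) such that $x<y$ in $P$ iff $r_x<l_y$; $(X,P)$ is an interval order if it has one. $\mathbf{P}$ has no duplicated holdings if no two distinct elements can be assigned the same interval. A representation is distinguishing if no two intervals share an endpoint (every real number occurs at most once as an endpoint). A linear extension of $P$ is a linear order $L$ on $X$ with $P\subseteq L$. A choice function on the representation $\mathbf{I}$ is an injection $f:X\to\mathbb{R}$ with $l_x\le f(x)\le r_x$ for all $x$; $L(f)$ is the linear order on $X$ with $x<y$ in $L(f)$ iff $f(x)<f(y)$. *)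

theory Defs
  imports Complex_Main
begin

definition strict_poset :: "'a set \<Rightarrow> ('a \<times> 'a) set \<Rightarrow> bool" where
  "strict_poset X P \<longleftrightarrow> P \<subseteq> X \<times> X \<and> (\<forall>x\<in>X. (x, x) \<notin> P)
     \<and> (\<forall>x\<in>X. \<forall>y\<in>X. \<forall>z\<in>X. (x, y) \<in> P \<longrightarrow> (y, z) \<in> P \<longrightarrow> (x, z) \<in> P)"

definition interval_rep :: "'a set \<Rightarrow> ('a \<times> 'a) set \<Rightarrow> ('a \<Rightarrow> real) \<Rightarrow> ('a \<Rightarrow> real) \<Rightarrow> bool" where
  "interval_rep X P l r \<longleftrightarrow> (\<forall>x\<in>X. l x \<le> r x)
     \<and> (\<forall>x\<in>X. \<forall>y\<in>X. (x, y) \<in> P \<longleftrightarrow> r x < l y)"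

definition interval_order :: "'a set \<Rightarrow> ('a \<times> 'a) set \<Rightarrow> bool" where
  "interval_order X P \<longleftrightarrow> strict_poset X P \<and> (\<exists>l r. interval_rep X P l r)"

definition no_duplicated_holdings :: "'a set \<Rightarrow> ('a \<times> 'a) set \<Rightarrow> bool" where
  "no_duplicated_holdings X P \<longleftrightarrow>
     (\<forall>x\<in>X. \<forall>y\<in>X. x \<noteq> y \<longrightarrow>
        \<not> (\<exists>l r. interval_rep X P l r \<and> l x = l y \<and> r x = r y))"

definition distinguishing :: "'a set \<Rightarrow> ('a \<Rightarrow> real) \<Rightarrow> ('a \<Rightarrow> real) \<Rightarrow> bool" where
  "distinguishing X l r \<longleftrightarrow>
     (\<forall>x\<in>X. \<forall>y\<in>X. x \<noteq> y \<longrightarrow> {l x, r x} \<inter> {l y, r y} = {})"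

definition linear_extension :: "'a set \<Rightarrow> ('a \<times> 'a) set \<Rightarrow> ('a \<times> 'a) set \<Rightarrow> bool" where
  "linear_extension X P L \<longleftrightarrow> strict_poset X L
     \<and> (\<forall>x\<in>X. \<forall>y\<in>X. x \<noteq> y \<longrightarrow> (x, y) \<in> L \<or> (y, x) \<in> L) \<and> P \<subseteq> L"

definition choice_function :: "'a set \<Rightarrow> ('a \<Rightarrow> real) \<Rightarrow> ('a \<Rightarrow> real) \<Rightarrow> ('a \<Rightarrow> real) \<Rightarrow> bool" where
  "choice_function X l r f \<longleftrightarrow> inj_on f X \<and> (\<forall>x\<in>X. l x \<le> f x \<and> f x \<le> r x)"

definition order_of :: "'a set \<Rightarrow> ('a \<Rightarrow> real) \<Rightarrow> ('a \<times> 'a) set" where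
  "order_of X f = {(x, y). x \<in> X \<and> y \<in> X \<and> f x < f y}"

end

theory Submission
  imports Defs
begin

text \<open>If \<open>x\<close> precedes \<open>y\<close> in the linear extension \<open>L\<close>, then \<open>y\<close> does not precede \<open>x\<close> in \<open>P\<close>,
  so \<open>l x \<le> r y\<close>, and as the representation is distinguishing in fact \<open>l x < r y\<close>. This gap
  condition suffices: every element other than the \<open>L\<close>-greatest one \<open>m\<close> has \<open>l x < r m\<close>, so by
  induction those elements get values in their intervals below \<open>r m\<close>, and \<open>m\<close> then gets a value
  in \<open>[l m, r m]\<close> above all of them.\<close>

definition strict_linear_order :: "'a set \<Rightarrow> ('a \<times> 'a) set \<Rightarrow> bool" where
  "strict_linear_order X L \<longleftrightarrow> strict_poset X L \<and> total_on X L"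

lemma linear_extension_iff:
  "linear_extension X P L \<longleftrightarrow> strict_linear_order X L \<and> P \<subseteq> L"
  unfolding linear_extension_def strict_linear_order_def total_on_def by blast

lemma strict_linear_order_restrict:
  assumes "strict_linear_order X L" "Y \<subseteq> X"
  shows "strict_linear_order Y (L \<inter> Y \<times> Y)"
  using assms unfolding strict_linear_order_def strict_poset_def total_on_def by blast

lemma strict_poset_wf_converse:
  assumes "finite X" "strict_poset X L"
  shows "wf (L\<inverse>)"
proof (rule wf_converse)
  have sub: "L \<subseteq> X \<times> X" using assms(2) unfolding strict_poset_def by blast
  then show "finite L" using assms(1) finite_subset by blast
  show "irrefl L" using sub assms(2) unfolding strict_poset_def irrefl_def by blast
  show "trans L" using sub assms(2) unfolding strict_poset_def trans_def by blast
qed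

lemma strict_linear_order_ex_greatest:
  assumes "finite X" "X \<noteq> {}" "strict_linear_order X L"
  obtains m where "m \<in> X" "\<And>y. y \<in> X - {m} \<Longrightarrow> (y, m) \<in> L"
proof -
  have "wf (L\<inverse>)"
    using assms(1,3) strict_poset_wf_converse unfolding strict_linear_order_def by blast
  then obtain m where "m \<in> X" and maximal: "\<And>y. (y, m) \<in> L\<inverse> \<Longrightarrow> y \<notin> X"
    using assms(2) by (rule wfE_min') blast
  have "(y, m) \<in> L" if "y \<in> X - {m}" for y
  proof -
    have "(m, y) \<notin> L" using maximal that by blast
    then show ?thesis
      using assms(3) \<open>m \<in> X\<close> that unfolding strict_linear_order_def total_on_def by blast
  qed
  with \<open>m \<in> X\<close> show thesis by (rule that)
qed

lemma inj_on_if_total_on_order_of: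
  assumes "total_on X (order_of X f)"
  shows "inj_on f X"
  using assms unfolding total_on_def order_of_def inj_on_def by fastforce

lemma order_of_fun_upd_greatest:
  assumes L: "strict_linear_order X L"
    and m: "m \<in> X" "\<And>y. y \<in> X - {m} \<Longrightarrow> (y, m) \<in> L"
    and g: "order_of (X - {m}) g = L \<inter> (X - {m}) \<times> (X - {m})"
    and v: "\<And>y. y \<in> X - {m} \<Longrightarrow> g y < v"
  shows "order_of X (g(m := v)) = L"
proof -
  have "L \<subseteq> X \<times> X" and irrefl: "(m, m) \<notin> L"
    using L m(1) unfolding strict_linear_order_def strict_poset_def by blast+
  have not_above: "(m, y) \<notin> L" if "y \<in> X" for y
    using that L m unfolding strict_linear_order_def strict_poset_def by blast
  have "(x, y) \<in> L \<longleftrightarrow> (g(m := v)) x < (g(m := v)) y" if "x \<in> X" "y \<in> X" for x y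
  proof (cases "x = m"; cases "y = m")
    assume "x \<noteq> m" "y \<noteq> m"
    then show ?thesis using g that unfolding order_of_def by auto
  qed (use that irrefl not_above m(2) v in \<open>auto simp: less_imp_not_less\<close>)
  with \<open>L \<subseteq> X \<times> X\<close> show ?thesis unfolding order_of_def by auto
qed

lemma finite_ex_between:
  fixes f :: "'b \<Rightarrow> 'a :: {dense_linorder, no_bot}"
  assumes "finite A" "\<And>a. a \<in> A \<Longrightarrow> f a < c"
  obtains w where "w < c" "\<And>a. a \<in> A \<Longrightarrow> f a < w"
proof (cases "A = {}")
  case True
  then show thesis using lt_ex that by blast
next
  case False
  then have "Max (f ` A) < c" using assms by simp
  then obtain w where "Max (f ` A) < w" "w < c" using dense by blast
  moreover have "f a \<le> Max (f ` A)" if "a \<in> A" for a using assms(1) that by simp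
  ultimately show thesis using that by fastforce
qed

text \<open>The bound \<open>c\<close> strengthens the induction: the elements below the greatest \<open>m\<close> are
  realised below \<open>r m\<close>, which leaves room for the value of \<open>m\<close>.\<close>

lemma ex_choice_order_of_below:
  fixes l r :: "'a \<Rightarrow> real"
  assumes "finite X" "strict_linear_order X L"
    and "\<And>x. x \<in> X \<Longrightarrow> l x \<le> r x"
    and "\<And>x y. (x, y) \<in> L \<Longrightarrow> l x < r y"
    and "\<And>x. x \<in> X \<Longrightarrow> l x < c"
  shows "\<exists>f. (\<forall>x\<in>X. l x \<le> f x \<and> f x \<le> r x \<and> f x < c) \<and> order_of X f = L"
  using assms
proof (induction X arbitrary: L c rule: finite_psubset_induct)
  case (psubset X)
  show ?case
  proof (cases "X = {}")
    case True
    then have "L = {}"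
      using psubset.prems(1) unfolding strict_linear_order_def strict_poset_def by blast
    with True show ?thesis by (simp add: order_of_def)
  next
    case False
    obtain m where m: "m \<in> X" "\<And>y. y \<in> X - {m} \<Longrightarrow> (y, m) \<in> L"
      using strict_linear_order_ex_greatest[OF psubset.hyps(1) False psubset.prems(1)] by blast
    define c' where "c' = min c (r m)"
    have "\<exists>g. (\<forall>y\<in>X - {m}. l y \<le> g y \<and> g y \<le> r y \<and> g y < c')
      \<and> order_of (X - {m}) g = L \<inter> (X - {m}) \<times> (X - {m})"
    proof (rule psubset.IH)
      show "X - {m} \<subset> X" using m(1) by blast
      show "strict_linear_order (X - {m}) (L \<inter> (X - {m}) \<times> (X - {m}))"
        using strict_linear_order_restrict[OF psubset.prems(1)] by blast
      show "l y \<le> r y" if "y \<in> X - {m}" for y using psubset.prems(2) that by blast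
      show "l x < r y" if "(x, y) \<in> L \<inter> (X - {m}) \<times> (X - {m})" for x y
        using psubset.prems(3) that by blast
      show "l y < c'" if "y \<in> X - {m}" for y
        using psubset.prems(3)[OF m(2)[OF that]] psubset.prems(4) that unfolding c'_def by simp
    qed
    then obtain g where g: "\<forall>y\<in>X - {m}. l y \<le> g y \<and> g y \<le> r y \<and> g y < c'"
      and g_order: "order_of (X - {m}) g = L \<inter> (X - {m}) \<times> (X - {m})"
      by blast
    obtain w where "w < c'" and w: "\<And>y. y \<in> X - {m} \<Longrightarrow> g y < w"
      using finite_ex_between[of "X - {m}" g c'] psubset.hyps(1) g by blast
    define v where "v = max (l m) w"
    have v: "l m \<le> v" "v \<le> r m" "v < c"
      using \<open>w < c'\<close> psubset.prems(2,4) m(1) unfolding v_def c'_def by auto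
    have "g y < v" if "y \<in> X - {m}" for y
      using w[OF that] unfolding v_def by simp
    with psubset.prems(1) m g_order have "order_of X (g(m := v)) = L"
      by (rule order_of_fun_upd_greatest)
    moreover have "\<forall>x\<in>X. l x \<le> (g(m := v)) x \<and> (g(m := v)) x \<le> r x \<and> (g(m := v)) x < c"
      using g v unfolding c'_def by auto
    ultimately show ?thesis by blast
  qed
qed

lemma ex_choice_function_order_of:
  fixes l r :: "'a \<Rightarrow> real"
  assumes "finite X" "strict_linear_order X L"
    and "\<And>x. x \<in> X \<Longrightarrow> l x \<le> r x"
    and "\<And>x y. (x, y) \<in> L \<Longrightarrow> l x < r y"
  shows "\<exists>f. choice_function X l r f \<and> order_of X f = L"
proof -
  have bound: "l x < Max (l ` X) + 1" if "x \<in> X" for x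
  proof -
    have "l x \<le> Max (l ` X)" using assms(1) that by simp
    then show ?thesis by linarith
  qed
  obtain f where f: "\<forall>x\<in>X. l x \<le> f x \<and> f x \<le> r x" and L: "order_of X f = L"
    using ex_choice_order_of_below[of X L l r "Max (l ` X) + 1", OF assms bound] by blast
  have "inj_on f X"
    using inj_on_if_total_on_order_of assms(2) L unfolding strict_linear_order_def by blast
  with f L show ?thesis unfolding choice_function_def by blast
qed

lemma linear_extension_interval_gap:
  assumes "interval_rep X P l r" "distinguishing X l r" "linear_extension X P L"
    and "(x, y) \<in> L"
  shows "l x < r y"
proof -
  have L: "strict_poset X L" "P \<subseteq> L"
    using assms(3) unfolding linear_extension_def by blast+
  then have "x \<in> X" "y \<in> X" "x \<noteq> y" "(y, x) \<notin> L"
    using assms(4) unfolding strict_poset_def by blast+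
  then have "\<not> r y < l x"
    using L(2) assms(1) unfolding interval_rep_def by blast
  moreover have "{l x, r x} \<inter> {l y, r y} = {}"
    using assms(2) \<open>x \<in> X\<close> \<open>y \<in> X\<close> \<open>x \<noteq> y\<close> unfolding distinguishing_def by blast
  ultimately show ?thesis by auto
qed

theorem theorem4p3:
  fixes X :: "'a set" and P :: "('a \<times> 'a) set" and l r :: "'a \<Rightarrow> real"
  assumes "finite X"
    and "interval_order X P"
    and "no_duplicated_holdings X P"
    and "interval_rep X P l r"
    and "distinguishing X l r"
  shows "\<forall>L. linear_extension X P L \<longrightarrow>
           (\<exists>f. choice_function X l r f \<and> order_of X f = L)"
proof (intro allI impI)
  fix L assume L: "linear_extension X P L"
  show "\<exists>f. choice_function X l r f \<and> order_of X f = L"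
  proof (rule ex_choice_function_order_of)
    show "finite X" by fact
    show "strict_linear_order X L" using L linear_extension_iff by blast
    show "l x \<le> r x" if "x \<in> X" for x using assms(4) that unfolding interval_rep_def by blast
    show "l x < r y" if "(x, y) \<in> L" for x y
      using linear_extension_interval_gap[OF assms(4,5) L that] .
  qed
qed

end
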